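(* There is a constant $N>0$ such that for every discriminant $D\in\mathcal{O}_d$ with $|D|>N$ the following holds: if $\epsilon_D=\frac12(t_0+u_0\sqrt{D})$ is a fundamental solution of $t^2-u^2D=4$ and $\epsilon_D^{\,n+1}=\frac12(t_n+u_n\sqrt{D})$ with $t_n,u_n\in\mathcal{O}_d$, then $|t_n|<\frac49|u_n|^2$ for all $n\ge 2$.
   Context: $d\in\{1,2,3,7,11,19,43,67,163\}$ (so $k_d=\mathbb{Q}(\sqrt{-d})$ has class number one), $\mathcal{O}_d$ is the ring of integers of $k_d$. An element $D\in\mathcal{O}_d$ is a discriminant if $D$ is not a perfect square in $\mathcal{O}_d$ and $D\equiv x^2\pmod{4\mathcal{O}_d}$ for some $x\in\mathcal{O}_d$. The square root $\sqrt{D}$ is chosen with argument in $[0,\pi)$. For a solution $(t,u)\in\mathcal{O}_d^2$ of $t^2-u^2D=4$ set $\epsilon_{t,u}=\frac12(t+u\sqrt{D})$. A solution $(t_0,u_0)$ is fundamental if $|\epsilon_{t_0,u_0}|$ is the smallest value larger than $1$ among all $|\epsilon_{t,u}|$; then $\epsilon_D=\epsilon_{t_0,u_0}$. *)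

theory Defs
  imports "HOL-Analysis.Analysis"
begin

text \<open>The admissible values of d (class number one imaginary quadratic fields).\<close>
definition class_one_d :: "nat set" where
  "class_one_d = {1, 2, 3, 7, 11, 19, 43, 67, 163}"

text \<open>The ring of integers of Q(sqrt(-d)), as a subset of the complex numbers
  (d squarefree positive): Z[sqrt(-d)] if d = 1,2 mod 4, Z[(1+sqrt(-d))/2] if d = 3 mod 4.\<close>
definition omega_d :: "nat \<Rightarrow> complex" where
  "omega_d d = (if d mod 4 = 3 then (1 + \<i> * complex_of_real (sqrt (real d))) / 2
                else \<i> * complex_of_real (sqrt (real d)))"

definition O_d :: "nat \<Rightarrow> complex set" where
  "O_d d = {of_int a + of_int b * omega_d d | a b. True}"

definition discriminant :: "nat \<Rightarrow> complex \<Rightarrow> bool" where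
  "discriminant d D \<longleftrightarrow> D \<in> O_d d \<and> \<not> (\<exists>y\<in>O_d d. D = y ^ 2) \<and>
     (\<exists>x\<in>O_d d. \<exists>z\<in>O_d d. D - x ^ 2 = 4 * z)"

definition sqrtD :: "complex \<Rightarrow> complex" where
  "sqrtD D = (THE z. z ^ 2 = D \<and> 0 \<le> Arg z \<and> Arg z < pi)"

definition eps :: "complex \<Rightarrow> complex \<Rightarrow> complex \<Rightarrow> complex" where
  "eps D t u = (t + u * sqrtD D) / 2"

definition pell_sol :: "nat \<Rightarrow> complex \<Rightarrow> complex \<Rightarrow> complex \<Rightarrow> bool" where
  "pell_sol d D t u \<longleftrightarrow> t \<in> O_d d \<and> u \<in> O_d d \<and> t ^ 2 - u ^ 2 * D = 4"

definition fundamental_sol :: "nat \<Rightarrow> complex \<Rightarrow> complex \<Rightarrow> complex \<Rightarrow> bool" where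
  "fundamental_sol d D t0 u0 \<longleftrightarrow> pell_sol d D t0 u0 \<and> norm (eps D t0 u0) > 1 \<and>
     (\<forall>t u. pell_sol d D t u \<and> norm (eps D t u) > 1 \<longrightarrow> norm (eps D t0 u0) \<le> norm (eps D t u))"

end

theory Submission
  imports Defs "HOL-Computational_Algebra.Squarefree"
begin

text \<open>Let s = sqrtD D, \<epsilon> = (t0 + u0 s)/2 and \<epsilon>' = (t0 - u0 s)/2, so that \<epsilon> \<epsilon>' = 1.
  Because O_d is integrally closed and D is not a square in O_d, s does not lie in the quotient
  field k_d; hence coefficients with respect to 1, s are unique and the conjugation s \<mapsto> -s
  commutes with powers.  With E = \<epsilon>^(n+1) this gives tn = E + 1/E and un s = E - 1/E.
  As u0 is a nonzero integer, |\<epsilon> - \<epsilon>'| \<ge> |s|, so |\<epsilon>| > |s| - 1 and |E| > (|s| - 1)^3 for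
  n \<ge> 2.  Once |s| > 100, i.e. |D| > 10^4, this cubic growth beats the factor |s|^2 in
  9 |s|^2 |tn| \<le> 9 |s|^2 (|E| + 1) < 4 (|E| - 1)^2 \<le> 4 |s|^2 |un|^2.\<close>

lemma squarefree_class_one_d:
  assumes "d \<in> class_one_d"
  shows "squarefree d"
proof -
  have "d = 1 \<or> prime d" using assms by (auto simp: class_one_d_def)
  then show ?thesis by (auto intro: squarefree_prime)
qed

lemma mem_O_d_iff: "z \<in> O_d d \<longleftrightarrow> (\<exists>a b. z = of_int a + of_int b * omega_d d)"
  by (auto simp: O_d_def)

lemma O_dI: "z = of_int a + of_int b * omega_d d \<Longrightarrow> z \<in> O_d d"
  by (auto simp: O_d_def)

lemma of_real_sqrt_square: "complex_of_real (sqrt (real d)) ^ 2 = of_nat d"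
  by (metis of_real_of_nat_eq of_real_power of_nat_0_le_iff real_sqrt_pow2)

lemma omega_d_square_if_3_mod_4:
  assumes "d = 4 * k + 3"
  shows "omega_d d ^ 2 = omega_d d - of_nat (k + 1)"
proof -
  define s where "s = complex_of_real (sqrt (real d))"
  have omega: "omega_d d = (1 + \<i> * s) / 2" using assms by (simp add: omega_d_def s_def)
  have s: "s ^ 2 = 4 * of_nat k + 3" unfolding s_def of_real_sqrt_square assms by simp
  have "omega_d d ^ 2 = (1 + 2 * (\<i> * s) + (\<i> * s) ^ 2) / 4"
    unfolding omega by (simp add: power_divide power2_sum)
  also have "\<dots> = omega_d d - of_nat (k + 1)"
    unfolding omega power_mult_distrib s by (simp add: field_simps)
  finally show ?thesis .
qed

lemma omega_d_square_if_not_3_mod_4: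
  assumes "d mod 4 \<noteq> 3"
  shows "omega_d d ^ 2 = - of_nat d"
  using assms by (simp add: omega_d_def power_mult_distrib of_real_sqrt_square)

lemma O_d_of_int [simp]: "of_int n \<in> O_d d"
  by (rule O_dI[of _ n 0]) simp

lemma O_d_add:
  assumes "z \<in> O_d d" "w \<in> O_d d"
  shows "z + w \<in> O_d d"
proof -
  obtain a b a' b' where "z = of_int a + of_int b * omega_d d" "w = of_int a' + of_int b' * omega_d d"
    using assms by (auto simp: mem_O_d_iff)
  then show ?thesis by (intro O_dI[of _ "a + a'" "b + b'"]) (simp add: algebra_simps)
qed

lemma O_d_uminus:
  assumes "z \<in> O_d d"
  shows "- z \<in> O_d d"
proof -
  obtain a b where "z = of_int a + of_int b * omega_d d"
    using assms by (auto simp: mem_O_d_iff)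
  then show ?thesis by (intro O_dI[of _ "- a" "- b"]) (simp add: algebra_simps)
qed

lemma O_d_mult:
  assumes "z \<in> O_d d" "w \<in> O_d d"
  shows "z * w \<in> O_d d"
proof -
  obtain a b a' b' where zw: "z = of_int a + of_int b * omega_d d" "w = of_int a' + of_int b' * omega_d d"
    using assms by (auto simp: mem_O_d_iff)
  have zw_expand: "z * w = of_int (a * a') + of_int (a * b' + b * a') * omega_d d
      + of_int (b * b') * omega_d d ^ 2"
    unfolding zw by (simp add: algebra_simps power2_eq_square)
  show ?thesis
  proof (cases "d mod 4 = 3")
    case True
    then obtain k where k: "d = 4 * k + 3" by (metis div_mult_mod_eq mult.commute)
    show ?thesis
      unfolding zw_expand omega_d_square_if_3_mod_4[OF k]
      by (rule O_dI[of _ "a * a' - b * b' * (int k + 1)" "a * b' + b * a' + b * b'"])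
        (simp add: algebra_simps)
  next
    case False
    show ?thesis
      unfolding zw_expand omega_d_square_if_not_3_mod_4[OF False]
      by (rule O_dI[of _ "a * a' - b * b' * int d" "a * b' + b * a'"]) (simp add: algebra_simps)
  qed
qed

lemma O_d_cnj:
  assumes "z \<in> O_d d"
  shows "cnj z \<in> O_d d"
proof -
  obtain a b where z: "z = of_int a + of_int b * omega_d d"
    using assms by (auto simp: mem_O_d_iff)
  show ?thesis
  proof (cases "d mod 4 = 3")
    case True
    then have conj: "cnj (omega_d d) = 1 - omega_d d" by (simp add: omega_d_def complex_eq_iff)
    show ?thesis unfolding z by (intro O_dI[of _ "a + b" "- b"]) (simp add: conj algebra_simps)
  next
    case False
    then have conj: "cnj (omega_d d) = - omega_d d" by (simp add: omega_d_def complex_eq_iff)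
    show ?thesis unfolding z by (intro O_dI[of _ a "- b"]) (simp add: conj algebra_simps)
  qed
qed

lemma O_d_Ints_if_Im_eq_0:
  assumes "z \<in> O_d d" "d > 0" "Im z = 0"
  shows "z \<in> \<int>"
proof -
  obtain a b where z: "z = of_int a + of_int b * omega_d d"
    using assms(1) by (auto simp: mem_O_d_iff)
  have "Im (omega_d d) > 0" using assms(2) by (simp add: omega_d_def)
  moreover have "of_int b * Im (omega_d d) = 0" using z assms(3) by simp
  ultimately show ?thesis unfolding z by simp
qed

lemma O_d_norm_square_Ints:
  assumes "z \<in> O_d d" "d > 0"
  shows "norm z ^ 2 \<in> \<int>"
proof -
  have "z * cnj z \<in> \<int>"
    using assms by (intro O_d_Ints_if_Im_eq_0 O_d_mult O_d_cnj) (auto simp: algebra_simps)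
  then show ?thesis by (metis complex_norm_square of_real_in_Ints_iff)
qed

lemma O_d_norm_ge_1:
  assumes "z \<in> O_d d" "d > 0" "z \<noteq> 0"
  shows "norm z \<ge> 1"
proof -
  obtain n where n: "norm z ^ 2 = of_int n"
    using O_d_norm_square_Ints[OF assms(1,2)] by (auto elim: Ints_cases)
  moreover have "norm z ^ 2 > 0" using assms(3) by simp
  ultimately have "norm z ^ 2 \<ge> 1 ^ 2" by simp
  then show ?thesis by (rule power2_le_imp_le) simp
qed

lemma O_d_coords_Ints:
  assumes "z \<in> O_d d" "d > 0"
  shows "2 * Re z \<in> \<int>" "2 * Im z / sqrt (real d) \<in> \<int>"
proof -
  obtain a b where z: "z = of_int a + of_int b * omega_d d"
    using assms(1) by (auto simp: mem_O_d_iff)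
  have "2 * Re z = of_int (2 * a + (if d mod 4 = 3 then b else 0))
    \<and> 2 * Im z / sqrt (real d) = of_int (if d mod 4 = 3 then b else 2 * b)"
    using assms(2) unfolding z by (simp add: omega_d_def)
  then show "2 * Re z \<in> \<int>" "2 * Im z / sqrt (real d) \<in> \<int>" by simp_all
qed

lemma square_mod_4: "(p::int) ^ 2 mod 4 = p mod 2"
proof (cases "even p")
  case True
  then obtain a where "p = 2 * a" by blast
  then show ?thesis by (simp add: power_mult_distrib)
next
  case False
  then obtain a where p: "p = 2 * a + 1" by (rule oddE)
  define k where "k = a ^ 2 + a"
  have "p ^ 2 = 1 + k * 4" unfolding p k_def by (simp add: power2_eq_square algebra_simps)
  then show ?thesis using False by (simp add: odd_iff_mod_2_eq_one)
qed

lemma four_dvd_sum_squares_parity: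
  fixes p q k :: int
  assumes "4 dvd p ^ 2 + k * q ^ 2" "\<not> 4 dvd k"
  shows "even (p - q)" "k mod 4 \<noteq> 3 \<Longrightarrow> even q"
proof -
  have "(p mod 2 + (k mod 4) * (q mod 2)) mod 4 = (p ^ 2 + k * q ^ 2) mod 4"
    by (intro mod_add_cong mod_mult_cong) (simp_all add: square_mod_4)
  also have "\<dots> = 0" using assms(1) by simp
  finally have "(p mod 2 + (k mod 4) * (q mod 2)) mod 4 = 0" .
  moreover have "k mod 4 = 1 \<or> k mod 4 = 2 \<or> k mod 4 = 3" using assms(2) by presburger
  moreover have "p mod 2 \<in> {0, 1}" "q mod 2 \<in> {0, 1}" by auto
  ultimately have "p mod 2 = q mod 2" "k mod 4 \<noteq> 3 \<Longrightarrow> q mod 2 = 0" by auto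
  then show "even (p - q)" "k mod 4 \<noteq> 3 \<Longrightarrow> even q"
    by (auto simp: mod_eq_dvd_iff dvd_eq_mod_eq_0)
qed

lemma O_d_from_coords:
  assumes d: "squarefree d"
    and Re: "2 * Re z \<in> \<int>" and Im: "2 * Im z / sqrt (real d) \<in> \<int>" and norm: "norm z ^ 2 \<in> \<int>"
  shows "z \<in> O_d d"
proof -
  obtain p q n where p: "2 * Re z = of_int p" and q: "2 * Im z / sqrt (real d) = of_int q"
    and n: "norm z ^ 2 = of_int n"
    using Re Im norm by (auto elim!: Ints_cases)
  have "d > 0" using d by (auto intro: Nat.gr0I)
  then have z: "Re z = of_int p / 2" "Im z = of_int q * sqrt (real d) / 2"
    using p q by (simp_all add: field_simps)
  have "real_of_int (4 * n) = of_int (p ^ 2 + int d * q ^ 2)"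
    using n unfolding cmod_power2 z by (simp add: field_simps)
  then have "4 dvd p ^ 2 + int d * q ^ 2" by (metis of_int_eq_iff dvd_triv_left)
  moreover have "\<not> 4 dvd d" using squarefreeD[OF d, of 2] by auto
  then have "\<not> 4 dvd int d" by (metis int_dvd_int_iff of_nat_numeral)
  ultimately have parity: "even (p - q)" "int d mod 4 \<noteq> 3 \<Longrightarrow> even q"
    using four_dvd_sum_squares_parity by blast+
  show ?thesis
  proof (cases "d mod 4 = 3")
    case True
    from parity(1) obtain a where "p - q = 2 * a" by blast
    with True z show ?thesis
      by (intro O_dI[of _ a q]) (simp add: complex_eq_iff omega_d_def field_simps)
  next
    case False
    then have "int d mod 4 \<noteq> 3" by (metis of_nat_eq_iff of_nat_numeral zmod_int)
    with parity have "even p" "even q" by auto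
    then obtain a b where "p = 2 * a" "q = 2 * b" by (blast elim: evenE)
    with False z show ?thesis
      by (intro O_dI[of _ a b]) (simp add: complex_eq_iff omega_d_def field_simps)
  qed
qed

lemma Ints_if_Rats_and_squarefree_mult_square:
  fixes x :: real
  assumes "squarefree k" "x \<in> \<rat>" "real k * x ^ 2 \<in> \<int>"
  shows "x \<in> \<int>"
proof -
  obtain a b :: int where ab: "b > 0" "coprime a b" "x = of_int a / of_int b"
    using assms(2) by (auto elim: Rats_cases')
  obtain m :: int where "real k * x ^ 2 = of_int m" using assms(3) by (auto elim: Ints_cases)
  then have "real_of_int (int k * a ^ 2) = of_int (m * b ^ 2)"
    using ab(1) unfolding ab(3) by (simp add: field_simps)
  then have "b ^ 2 dvd int k * a ^ 2" by (metis of_int_eq_iff dvd_triv_right)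
  moreover have "coprime (b ^ 2) (a ^ 2)" using ab(2) by (simp add: coprime_commute)
  ultimately have "b ^ 2 dvd int k" using coprime_dvd_mult_left_iff by blast
  then have "nat b ^ 2 dvd k" using ab(1) by (metis int_dvd_int_iff int_nat_eq of_nat_power less_le)
  then have "nat b dvd 1" by (rule squarefreeD[OF assms(1)])
  then have "b = 1" using ab(1) by (simp add: nat_eq_iff)
  then show ?thesis using ab(3) by simp
qed

text \<open>The field k_d = Q(sqrt(-d)), as the fractions of O_d.\<close>
definition k_d :: "nat \<Rightarrow> complex set" where
  "k_d d = {c. \<exists>\<beta>\<in>O_d d. \<beta> \<noteq> 0 \<and> c * \<beta> \<in> O_d d}"

lemma k_dI: "\<beta> \<in> O_d d \<Longrightarrow> \<beta> \<noteq> 0 \<Longrightarrow> c * \<beta> \<in> O_d d \<Longrightarrow> c \<in> k_d d"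
  by (auto simp: k_d_def)

lemma k_dE:
  assumes "c \<in> k_d d"
  obtains \<beta> where "\<beta> \<in> O_d d" "\<beta> \<noteq> 0" "c * \<beta> \<in> O_d d"
  using assms by (auto simp: k_d_def)

lemma O_d_subset_k_d: "O_d d \<subseteq> k_d d"
proof
  fix c assume "c \<in> O_d d"
  then show "c \<in> k_d d" using O_d_of_int[of 1 d] by (intro k_dI[of 1]) simp_all
qed

lemma k_d_mult:
  assumes "z \<in> k_d d" "w \<in> k_d d"
  shows "z * w \<in> k_d d"
proof -
  obtain \<beta> \<gamma> where \<beta>: "\<beta> \<in> O_d d" "\<beta> \<noteq> 0" "z * \<beta> \<in> O_d d"
    and \<gamma>: "\<gamma> \<in> O_d d" "\<gamma> \<noteq> 0" "w * \<gamma> \<in> O_d d"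
    using assms by (meson k_dE)
  have "(z * w) * (\<beta> * \<gamma>) = (z * \<beta>) * (w * \<gamma>)" by (simp add: algebra_simps)
  also have "\<dots> \<in> O_d d" using \<beta> \<gamma> by (simp add: O_d_mult)
  finally show ?thesis using \<beta> \<gamma> k_dI[of "\<beta> * \<gamma>"] by (simp add: O_d_mult)
qed

lemma k_d_add:
  assumes "z \<in> k_d d" "w \<in> k_d d"
  shows "z + w \<in> k_d d"
proof -
  obtain \<beta> \<gamma> where \<beta>: "\<beta> \<in> O_d d" "\<beta> \<noteq> 0" "z * \<beta> \<in> O_d d"
    and \<gamma>: "\<gamma> \<in> O_d d" "\<gamma> \<noteq> 0" "w * \<gamma> \<in> O_d d"
    using assms by (meson k_dE)
  have "(z + w) * (\<beta> * \<gamma>) = (z * \<beta>) * \<gamma> + (w * \<gamma>) * \<beta>" by (simp add: algebra_simps)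
  also have "\<dots> \<in> O_d d" using \<beta> \<gamma> by (simp add: O_d_mult O_d_add)
  finally show ?thesis using \<beta> \<gamma> k_dI[of "\<beta> * \<gamma>"] by (simp add: O_d_mult)
qed

lemma k_d_uminus: "z \<in> k_d d \<Longrightarrow> - z \<in> k_d d"
  by (erule k_dE) (auto intro: k_dI dest: O_d_uminus)

lemma k_d_diff: "z \<in> k_d d \<Longrightarrow> w \<in> k_d d \<Longrightarrow> z - w \<in> k_d d"
  using k_d_add[of z d "- w"] k_d_uminus[of w d] by simp

lemma k_d_divide:
  assumes "z \<in> k_d d" "w \<in> k_d d" "w \<noteq> 0"
  shows "z / w \<in> k_d d"
proof -
  obtain \<beta> \<gamma> where \<beta>: "\<beta> \<in> O_d d" "\<beta> \<noteq> 0" "z * \<beta> \<in> O_d d"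
    and \<gamma>: "\<gamma> \<in> O_d d" "\<gamma> \<noteq> 0" "w * \<gamma> \<in> O_d d"
    using assms(1,2) by (meson k_dE)
  have "(z / w) * (w * \<gamma> * \<beta>) = (z * \<beta>) * \<gamma>" using assms(3) by (simp add: field_simps)
  also have "\<dots> \<in> O_d d" using \<beta> \<gamma> by (simp add: O_d_mult)
  finally show ?thesis using \<beta> \<gamma> assms(3) k_dI[of "w * \<gamma> * \<beta>"] by (simp add: O_d_mult)
qed

lemma k_d_half: "z \<in> k_d d \<Longrightarrow> z / 2 \<in> k_d d"
  using k_d_divide[of z d 2] O_d_subset_k_d O_d_of_int[of 2 d] by auto

lemma k_d_coords_Rats:
  assumes "c \<in> k_d d" "d > 0"
  shows "2 * Re c \<in> \<rat>" "2 * Im c / sqrt (real d) \<in> \<rat>"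
proof -
  obtain \<beta> where \<beta>: "\<beta> \<in> O_d d" "\<beta> \<noteq> 0" "c * \<beta> \<in> O_d d" using assms(1) by (rule k_dE)
  define m where "m = norm \<beta> ^ 2"
  have "m \<in> \<int>" "m \<noteq> 0" unfolding m_def using O_d_norm_square_Ints \<beta>(1,2) assms(2) by auto
  then have m: "m \<in> \<rat>" "m \<noteq> 0" by (auto simp: Ints_subset_Rats[THEN subsetD])
  define g where "g = c * \<beta> * cnj \<beta>"
  have "g \<in> O_d d" unfolding g_def by (rule O_d_mult[OF \<beta>(3) O_d_cnj[OF \<beta>(1)]])
  then have g: "2 * Re g \<in> \<rat>" "2 * Im g / sqrt (real d) \<in> \<rat>"
    using O_d_coords_Ints assms(2) by (auto simp: Ints_subset_Rats[THEN subsetD])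
  have "g = c * of_real m" unfolding g_def m_def complex_norm_square by (simp add: mult.assoc)
  then have "2 * Re c = 2 * Re g / m" "2 * Im c / sqrt (real d) = 2 * Im g / sqrt (real d) / m"
    using m(2) by simp_all
  then show "2 * Re c \<in> \<rat>" "2 * Im c / sqrt (real d) \<in> \<rat>"
    using g m(1) by (metis Rats_divide)+
qed

lemma O_d_if_square_in_O_d:
  assumes d: "squarefree d" and c: "c \<in> k_d d" and c2: "c ^ 2 \<in> O_d d"
  shows "c \<in> O_d d"
proof -
  have "d > 0" using d by (auto intro: Nat.gr0I)
  define P Q X where "P = 2 * Re c" and "Q = 2 * Im c / sqrt (real d)" and "X = norm c ^ 2"
  have P: "P \<in> \<rat>" and Q: "Q \<in> \<rat>"
    using k_d_coords_Rats[OF c \<open>d > 0\<close>] unfolding P_def Q_def by auto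
  have X_PQ: "4 * X = P ^ 2 + real d * Q ^ 2"
    using \<open>d > 0\<close> unfolding P_def Q_def X_def cmod_power2 by (simp add: field_simps)
  have P_X: "P ^ 2 = 2 * Re (c ^ 2) + 2 * X"
    unfolding P_def X_def cmod_power2 by (simp add: power2_eq_square)
  have X_eq: "X = (P ^ 2 + real d * Q ^ 2) / 4" using X_PQ by simp
  have "X \<in> \<rat>" unfolding X_eq using P Q by simp
  moreover have "real 1 * X ^ 2 \<in> \<int>"
    using O_d_norm_square_Ints[OF c2 \<open>d > 0\<close>] unfolding X_def by (simp add: norm_power power_mult)
  ultimately have X_Int: "X \<in> \<int>" by (rule Ints_if_Rats_and_squarefree_mult_square[OF squarefree_1])
  have "real 1 * P ^ 2 \<in> \<int>"
    unfolding P_X using O_d_coords_Ints(1)[OF c2 \<open>d > 0\<close>] X_Int by simp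
  with P have P_Int: "P \<in> \<int>" by (rule Ints_if_Rats_and_squarefree_mult_square[OF squarefree_1])
  have "real d * Q ^ 2 = 4 * X - P ^ 2" using X_PQ by simp
  then have "real d * Q ^ 2 \<in> \<int>" using X_Int P_Int by simp
  with Q have "Q \<in> \<int>" by (rule Ints_if_Rats_and_squarefree_mult_square[OF d])
  then show ?thesis
    using O_d_from_coords[OF d] P_Int X_Int unfolding P_def Q_def X_def by blast
qed

lemma Arg_nonneg_less_pi_iff: "0 \<le> Arg z \<and> Arg z < pi \<longleftrightarrow> Im z > 0 \<or> (Im z = 0 \<and> Re z \<ge> 0)"
proof -
  have "Arg z < pi \<longleftrightarrow> Arg z \<noteq> pi" using Arg_le_pi[of z] by auto
  then show ?thesis using Arg_less_0[of z] Arg_eq_pi[of z] by auto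
qed

lemma sqrtD_square: "sqrtD D ^ 2 = D"
proof -
  let ?P = "\<lambda>z. z ^ 2 = D \<and> 0 \<le> Arg z \<and> Arg z < pi"
  have "?P (csqrt D) \<or> ?P (- csqrt D)"
    unfolding Arg_nonneg_less_pi_iff by auto
  then have ex: "\<exists>z. ?P z" by blast
  have unique: "y = z" if "?P y" "?P z" for y z
  proof -
    have "(y - z) * (y + z) = 0" using that by (simp add: algebra_simps power2_eq_square)
    then have "y = z \<or> y = - z" by (auto simp: add_eq_0_iff)
    then show ?thesis using that unfolding Arg_nonneg_less_pi_iff by (auto simp: complex_eq_iff)
  qed
  have "?P (THE z. ?P z)" by (rule theI') (use ex unique in blast)
  then show ?thesis unfolding sqrtD_def by simp
qed

definition eps_conj :: "complex \<Rightarrow> complex \<Rightarrow> complex \<Rightarrow> complex" where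
  "eps_conj D t u = (t - u * sqrtD D) / 2"

lemma eps_mult_eps_conj: "t ^ 2 - u ^ 2 * D = 4 \<Longrightarrow> eps D t u * eps_conj D t u = 1"
  unfolding eps_def eps_conj_def
  by (simp add: field_simps power2_eq_square sqrtD_square[of D, unfolded power2_eq_square])

lemma eps_mult: "eps D a b * eps D t u = eps D ((a * t + b * u * D) / 2) ((a * u + b * t) / 2)"
proof -
  define s where "s = sqrtD D"
  have "s * s = D" using sqrtD_square[of D] unfolding s_def by (simp add: power2_eq_square)
  moreover have "(a + b * s) / 2 * ((t + u * s) / 2)
      = ((a * t + b * u * (s * s)) / 2 + (a * u + b * t) / 2 * s) / 2"
    by (simp add: field_simps)
  ultimately show ?thesis unfolding eps_def s_def by simp
qed

lemma eps_conj_mult: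
  "eps_conj D a b * eps_conj D t u = eps_conj D ((a * t + b * u * D) / 2) ((a * u + b * t) / 2)"
proof -
  define s where "s = sqrtD D"
  have "s * s = D" using sqrtD_square[of D] unfolding s_def by (simp add: power2_eq_square)
  moreover have "(a - b * s) / 2 * ((t - u * s) / 2)
      = ((a * t + b * u * (s * s)) / 2 - (a * u + b * t) / 2 * s) / 2"
    by (simp add: field_simps)
  ultimately show ?thesis unfolding eps_conj_def s_def by simp
qed

lemma eps_power_k_d:
  assumes "t \<in> k_d d" "u \<in> k_d d" "D \<in> k_d d"
  shows "\<exists>a\<in>k_d d. \<exists>b\<in>k_d d. eps D t u ^ n = eps D a b \<and> eps_conj D t u ^ n = eps_conj D a b"
proof (induction n)
  case 0
  have "2 \<in> k_d d" "0 \<in> k_d d" using O_d_subset_k_d O_d_of_int[of 2 d] O_d_of_int[of 0 d] by auto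
  then show ?case
    by - (rule bexI[of _ 2], rule bexI[of _ 0], simp_all add: eps_def eps_conj_def)
next
  case (Suc n)
  then obtain a b where ab: "a \<in> k_d d" "b \<in> k_d d"
    and pow: "eps D t u ^ n = eps D a b" "eps_conj D t u ^ n = eps_conj D a b" by blast
  have "(a * t + b * u * D) / 2 \<in> k_d d" "(a * u + b * t) / 2 \<in> k_d d"
    using ab assms by (auto intro!: k_d_half k_d_add k_d_mult)
  moreover have "eps D t u ^ Suc n = eps D ((a * t + b * u * D) / 2) ((a * u + b * t) / 2)"
    unfolding power_Suc2 pow by (rule eps_mult)
  moreover have "eps_conj D t u ^ Suc n = eps_conj D ((a * t + b * u * D) / 2) ((a * u + b * t) / 2)"
    unfolding power_Suc2 pow by (rule eps_conj_mult)
  ultimately show ?case by blast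
qed

lemma eps_inject_k_d:
  assumes "a \<in> k_d d" "b \<in> k_d d" "a' \<in> k_d d" "b' \<in> k_d d" "sqrtD D \<notin> k_d d"
    and "eps D a b = eps D a' b'"
  shows "a = a'" "b = b'"
proof -
  show "b = b'"
  proof (rule ccontr)
    assume "b \<noteq> b'"
    have "a + b * sqrtD D = 2 * eps D a b" "a' + b' * sqrtD D = 2 * eps D a' b'"
      by (simp_all add: eps_def)
    with assms(6) have "a + b * sqrtD D = a' + b' * sqrtD D" by simp
    then have "(b - b') * sqrtD D = a' - a" by (simp add: algebra_simps)
    with \<open>b \<noteq> b'\<close> have "sqrtD D = (a' - a) / (b - b')" by (simp add: field_simps)
    moreover have "(a' - a) / (b - b') \<in> k_d d"
      using \<open>b \<noteq> b'\<close> assms(1-4) by (intro k_d_divide k_d_diff) simp_all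
    ultimately show False using assms(5) by simp
  qed
  with assms(6) show "a = a'" by (simp add: eps_def)
qed

lemma eps_conj_power:
  assumes "t \<in> k_d d" "u \<in> k_d d" "D \<in> k_d d" "a \<in> k_d d" "b \<in> k_d d" "sqrtD D \<notin> k_d d"
    and "eps D t u ^ n = eps D a b"
  shows "eps_conj D t u ^ n = eps_conj D a b"
proof -
  obtain a' b' where "a' \<in> k_d d" "b' \<in> k_d d"
    and "eps D t u ^ n = eps D a' b'" "eps_conj D t u ^ n = eps_conj D a' b'"
    using eps_power_k_d[OF assms(1-3)] by blast
  with assms(4-7) eps_inject_k_d[of a' d b' a b D] show ?thesis by simp
qed

lemma sqrtD_notin_k_d:
  assumes "squarefree d" "discriminant d D"
  shows "sqrtD D \<notin> k_d d"
proof
  assume "sqrtD D \<in> k_d d"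
  moreover have "sqrtD D ^ 2 \<in> O_d d" using assms(2) by (simp add: sqrtD_square discriminant_def)
  ultimately have "sqrtD D \<in> O_d d" by (rule O_d_if_square_in_O_d[OF assms(1)])
  then show False using assms(2) sqrtD_square[of D] by (auto simp: discriminant_def)
qed

lemma norm_eps_gt_norm_sqrtD_minus_1:
  assumes "pell_sol d D t u" "d > 0" "norm (eps D t u) > 1"
  shows "norm (eps D t u) > norm (sqrtD D) - 1"
proof -
  have u: "u \<in> O_d d" and pell: "t ^ 2 - u ^ 2 * D = 4" using assms(1) by (auto simp: pell_sol_def)
  have inv: "norm (eps D t u) * norm (eps_conj D t u) = 1"
    using eps_mult_eps_conj[OF pell] by (metis norm_mult norm_one)
  have conj_lt_1: "norm (eps_conj D t u) < 1"
  proof (rule ccontr)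
    assume "\<not> norm (eps_conj D t u) < 1"
    then have "norm (eps D t u) * 1 \<le> norm (eps D t u) * norm (eps_conj D t u)"
      by (intro mult_left_mono) auto
    with inv assms(3) show False by simp
  qed
  have "u \<noteq> 0"
  proof
    assume "u = 0"
    then have "eps_conj D t u = eps D t u" by (simp add: eps_def eps_conj_def)
    with conj_lt_1 assms(3) show False by simp
  qed
  have "norm (sqrtD D) \<le> norm u * norm (sqrtD D)"
    using mult_right_mono[OF O_d_norm_ge_1[OF u assms(2) \<open>u \<noteq> 0\<close>], of "norm (sqrtD D)"] by simp
  also have "\<dots> = norm (eps D t u - eps_conj D t u)"
    by (simp add: eps_def eps_conj_def norm_mult flip: diff_divide_distrib)
  also have "\<dots> \<le> norm (eps D t u) + norm (eps_conj D t u)" by (rule norm_triangle_ineq4)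
  finally show ?thesis using conj_lt_1 by simp
qed

lemma cubic_dominates_square:
  fixes r F :: real
  assumes r: "r > 100" and F: "F > (r - 1) ^ 3"
  shows "9 * r ^ 2 * (F + 1) < 4 * (F - 1) ^ 2"
proof -
  have "(r - 1) ^ 3 = (r - 1) * (r - 1) ^ 2" by (simp add: power3_eq_cube power2_eq_square)
  also have "\<dots> \<ge> 99 * (r - 1) ^ 2" using r by (intro mult_right_mono) auto
  finally have "(r - 1) ^ 3 \<ge> 99 * (r - 1) ^ 2" .
  moreover have "(r - 1) ^ 2 \<ge> (99 / 100 * r) ^ 2" using r by (intro power_mono) auto
  moreover have "(99 / 100 * r) ^ 2 = 9801 / 10000 * r ^ 2" by (simp add: power2_eq_square)
  moreover have "r ^ 2 > 1" using r by (simp add: one_less_power)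
  ultimately have G: "F - 1 > 96 * r ^ 2" using F by linarith
  with \<open>r ^ 2 > 1\<close> have "F + 1 < 2 * (F - 1)" by simp
  then have "9 * r ^ 2 * (F + 1) < 9 * r ^ 2 * (2 * (F - 1))"
    using \<open>r ^ 2 > 1\<close> by (intro mult_strict_left_mono) auto
  also have "\<dots> = 18 * r ^ 2 * (F - 1)" by simp
  also have "\<dots> < 4 * (F - 1) * (F - 1)" using G \<open>r ^ 2 > 1\<close> by (intro mult_strict_right_mono) auto
  also have "\<dots> = 4 * (F - 1) ^ 2" by (simp add: power2_eq_square)
  finally show ?thesis .
qed

lemma norm_add_inverse_less_norm_diff_inverse_square:
  fixes E s t u :: complex
  assumes s: "norm s > 100" and E: "norm E > (norm s - 1) ^ 3"
    and t: "t = E + 1 / E" and u: "u * s = E - 1 / E"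
  shows "norm t < 4 / 9 * norm u ^ 2"
proof -
  define F where "F = norm E"
  have "(norm s - 1) ^ 3 > 1" using s by (simp add: one_less_power)
  with E have F: "F > 1" unfolding F_def by simp
  have "norm t \<le> F + 1 / F" unfolding t F_def by (metis norm_triangle_ineq norm_divide norm_one)
  also have "\<dots> \<le> F + 1" using F by simp
  finally have "9 * norm s ^ 2 * norm t \<le> 9 * norm s ^ 2 * (F + 1)" by (intro mult_left_mono) auto
  also have "\<dots> < 4 * (F - 1) ^ 2" using cubic_dominates_square[OF s E[folded F_def]] .
  also have "F - 1 \<le> norm u * norm s"
  proof -
    have "F - 1 / F \<le> norm (u * s)" unfolding u F_def by (metis norm_triangle_ineq2 norm_divide norm_one)
    moreover have "1 / F \<le> 1" using F by simp
    ultimately show ?thesis by (simp add: norm_mult)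
  qed
  then have "4 * (F - 1) ^ 2 \<le> 4 * (norm u * norm s) ^ 2" using F by (simp add: power_mono)
  finally have "norm s ^ 2 * (9 * norm t) < norm s ^ 2 * (4 * norm u ^ 2)"
    by (simp add: power_mult_distrib algebra_simps)
  then have "9 * norm t < 4 * norm u ^ 2" using s by (subst (asm) mult_less_cancel_left_pos) auto
  then show ?thesis by simp
qed

lemma eps_power_trace:
  assumes "t ^ 2 - u ^ 2 * D = 4"
    and "eps D t u ^ k = eps D a b" "eps_conj D t u ^ k = eps_conj D a b"
  shows "a = eps D t u ^ k + 1 / eps D t u ^ k"
    and "b * sqrtD D = eps D t u ^ k - 1 / eps D t u ^ k"
proof -
  have "eps_conj D t u = 1 / eps D t u"
    using inverse_unique[OF eps_mult_eps_conj[OF assms(1)]] by (simp add: inverse_eq_divide)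
  then have "1 / eps D t u ^ k = eps_conj D a b" using assms(3) by (simp add: power_one_over)
  then show "a = eps D t u ^ k + 1 / eps D t u ^ k"
    and "b * sqrtD D = eps D t u ^ k - 1 / eps D t u ^ k"
    unfolding assms(2) by (simp_all add: eps_def eps_conj_def field_simps)
qed

theorem lemma4p5:
  fixes d :: nat
  assumes "d \<in> class_one_d"
  shows "\<exists>N::real. N > 0 \<and>
    (\<forall>D t0 u0. discriminant d D \<and> norm D > N \<and> fundamental_sol d D t0 u0 \<longrightarrow>
      (\<forall>n::nat. \<forall>tn un. n \<ge> 2 \<and> tn \<in> O_d d \<and> un \<in> O_d d \<and>
          eps D t0 u0 ^ (n + 1) = eps D tn un \<longrightarrow>
          norm tn < 4 / 9 * norm un ^ 2))"
proof (intro exI[of _ 10000] conjI allI impI)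
  fix D t0 u0 n tn un
  assume "discriminant d D \<and> norm D > 10000 \<and> fundamental_sol d D t0 u0"
    and "n \<ge> 2 \<and> tn \<in> O_d d \<and> un \<in> O_d d \<and> eps D t0 u0 ^ (n + 1) = eps D tn un"
  then have disc: "discriminant d D" and D: "norm D > 10000" and sol: "pell_sol d D t0 u0"
    and eps: "norm (eps D t0 u0) > 1" and n: "n \<ge> 2" and tn_un: "tn \<in> O_d d" "un \<in> O_d d"
    and pow: "eps D t0 u0 ^ (n + 1) = eps D tn un"
    by (auto simp: fundamental_sol_def)
  have d: "squarefree d" using assms by (rule squarefree_class_one_d)
  then have "d > 0" by (auto intro: Nat.gr0I)
  have pell: "t0 ^ 2 - u0 ^ 2 * D = 4"
    and "t0 \<in> k_d d" "u0 \<in> k_d d" "D \<in> k_d d" "tn \<in> k_d d" "un \<in> k_d d"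
    using sol disc tn_un O_d_subset_k_d by (auto simp: pell_sol_def discriminant_def)
  then have "eps_conj D t0 u0 ^ (n + 1) = eps_conj D tn un"
    using eps_conj_power sqrtD_notin_k_d[OF d disc] pow by blast
  note trace = eps_power_trace[OF pell pow this]
  have "100 ^ 2 < norm (sqrtD D) ^ 2" using D by (simp flip: norm_power add: sqrtD_square)
  then have s: "norm (sqrtD D) > 100" by (rule power2_less_imp_less) simp
  have "(norm (sqrtD D) - 1) ^ 3 < norm (eps D t0 u0) ^ 3"
    using norm_eps_gt_norm_sqrtD_minus_1[OF sol \<open>d > 0\<close> eps] s by (intro power_strict_mono) auto
  also have "\<dots> \<le> norm (eps D t0 u0 ^ (n + 1))"
    unfolding norm_power using eps n by (intro power_increasing) auto
  finally show "norm tn < 4 / 9 * norm un ^ 2"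
    using norm_add_inverse_less_norm_diff_inverse_square[OF s _ trace] by blast
qed simp

end
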